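(* When the characteristic functions range over $V_2$, there exists an irrevocable (non-wasteful) distribution policy whose competitive ratio with respect to greedy players is $\alpha=1$.
   Context: Players: a finite set $N=\{a_1,\dots,a_n\}$. A characteristic function is $v:2^N\to\mathbb{R}_{\ge 0}$ with $v(\emptyset)=0$. There are fixed, known constants $0<\mathsf{min}\le\mathsf{max}$ and every $v$ considered is monotone and bounded: $\mathsf{min}\le v(S)\le v(T)\le\mathsf{max}$ for all nonempty $S\subseteq T\subseteq N$. $V_2$ denotes the set of such $v$ with $2\mathsf{min}\le\mathsf{max}<3\mathsf{min}$. A coalition structure is a partition $C$ of $N$; its social welfare is $\mathsf{SW}(C\mid v)=\sum_{S\in C}v(S)$. Online process: an arrival order is a permutation $\pi=(\pi_1,\dots,\pi_n)$ of $N$; player $\pi_t$ arrives at time $t$. For $S\subseteq N$, $\pi_{|S}$ denotes the players of $S$ in the relative order of $\pi$; $\pi_{|S}$ is a prefix of $\pi_{|T}$ if $S\subseteq T$ and the players of $S$ are the first $|S|$ players of $\pi_{|T}$. Let $C^{t-1}$ be the coalition structure of players arrived before time $t$ ($C^0=\emptyset$). At time $t$, player $\pi_t$ either joins an existing coalition $S\in C^{t-1}$ or forms $\{\pi_t\}$ (choice $S=\emptyset$); decisions are never revised. A distribution policy $\varphi$ assigns to every $S\subseteq N$ and order $\pi_{|S}$ a vector $(\varphi_i(S,\pi_{|S}\mid v))_{i\in S}$ with $\sum_{i\in S}\varphi_i(S,\pi_{|S})=v(S)$ (non-wasteful); it may depend on the whole function $v$. It is irrevocable if for every $\pi$, every $S\subseteq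 T\subseteq N$ with $\pi_{|S}$ a prefix of $\pi_{|T}$ and every $i\in S$, $\varphi_i(S,\pi_{|S})\le\varphi_i(T,\pi_{|T})$. Greedy players: $\pi_t$ chooses $S^*\in\arg\max_{S\in C^{t-1}\cup\{\emptyset\}}\varphi_{\pi_t}(S\cup\{\pi_t\},\pi_{|S\cup\{\pi_t\}})$ (predetermined tie-breaking). $C_g(v,\pi\mid\varphi)$ is the final structure. The competitive ratio over a class is $\alpha=\inf_{v,\pi}\mathsf{SW}(C_g(v,\pi\mid\varphi))/\max_C\mathsf{SW}(C\mid v)$, over $v$ in the class and all arrival orders $\pi$. *)

theory Defs
  imports Complex_Main "HOL-Library.Disjoint_Sets" "HOL-Library.Sublist"
begin

text \<open>A distribution policy takes the characteristic function v, the arrival order of a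
  coalition S (the distinct list pi restricted to S, whose underlying set is S), and a
  player i, and returns the share of i.\<close>

type_synonym 'a charfun = "'a set \<Rightarrow> real"
type_synonym 'a policy = "'a charfun \<Rightarrow> 'a list \<Rightarrow> 'a \<Rightarrow> real"

definition bounded_monotone :: "'a set \<Rightarrow> real \<Rightarrow> real \<Rightarrow> 'a charfun \<Rightarrow> bool" where
  "bounded_monotone N mn mx v \<longleftrightarrow> v {} = 0 \<and>
     (\<forall>S T. S \<noteq> {} \<and> S \<subseteq> T \<and> T \<subseteq> N \<longrightarrow> mn \<le> v S \<and> v S \<le> v T \<and> v T \<le> mx)"

definition V2 :: "'a set \<Rightarrow> real \<Rightarrow> real \<Rightarrow> 'a charfun set" where
  "V2 N mn mx = {v. 0 < mn \<and> 2 * mn \<le> mx \<and> mx < 3 * mn \<and> bounded_monotone N mn mx v}"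

definition arrival_order :: "'a set \<Rightarrow> 'a list \<Rightarrow> bool" where
  "arrival_order N \<pi> \<longleftrightarrow> distinct \<pi> \<and> set \<pi> = N"

definition restr :: "'a list \<Rightarrow> 'a set \<Rightarrow> 'a list" where
  "restr \<pi> S = filter (\<lambda>x. x \<in> S) \<pi>"

definition non_wasteful :: "'a set \<Rightarrow> 'a charfun set \<Rightarrow> 'a policy \<Rightarrow> bool" where
  "non_wasteful N V \<phi> \<longleftrightarrow>
     (\<forall>v\<in>V. \<forall>\<sigma>. distinct \<sigma> \<and> set \<sigma> \<subseteq> N \<longrightarrow> (\<Sum>i\<in>set \<sigma>. \<phi> v \<sigma> i) = v (set \<sigma>))"

text \<open>Every distinct list over a subset of N arises as pi|T for some arrival order pi, and the
  prefix condition is exactly list prefix.\<close>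
definition irrevocable :: "'a set \<Rightarrow> 'a charfun set \<Rightarrow> 'a policy \<Rightarrow> bool" where
  "irrevocable N V \<phi> \<longleftrightarrow>
     (\<forall>v\<in>V. \<forall>\<pi>. arrival_order N \<pi> \<longrightarrow>
        (\<forall>S T. S \<subseteq> T \<and> T \<subseteq> N \<and> prefix (restr \<pi> S) (restr \<pi> T) \<longrightarrow>
           (\<forall>i\<in>S. \<phi> v (restr \<pi> S) i \<le> \<phi> v (restr \<pi> T) i)))"

text \<open>Greedy dynamics. greedy_reach phi v pi t C: C is a coalition structure of the first t
  players that can arise when each arriving player picks a coalition of C^(t-1) or the
  empty choice maximising its share; ties may be broken arbitrarily (every predetermined
  tie-breaking rule yields one of these runs).\<close>
inductive greedy_reach :: "'a policy \<Rightarrow> 'a charfun \<Rightarrow> 'a list \<Rightarrow> nat \<Rightarrow> 'a set set \<Rightarrow> bool"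
  for \<phi> v \<pi> where
  start: "greedy_reach \<phi> v \<pi> 0 {}"
| step: "\<lbrakk> greedy_reach \<phi> v \<pi> t C; t < length \<pi>; S \<in> insert {} C;
           \<forall>S'\<in>insert {} C. \<phi> v (restr \<pi> (insert (\<pi> ! t) S')) (\<pi> ! t)
                             \<le> \<phi> v (restr \<pi> (insert (\<pi> ! t) S)) (\<pi> ! t) \<rbrakk>
         \<Longrightarrow> greedy_reach \<phi> v \<pi> (Suc t) (insert (insert (\<pi> ! t) S) (C - {S}))"

definition greedy_outcome :: "'a policy \<Rightarrow> 'a charfun \<Rightarrow> 'a list \<Rightarrow> 'a set set \<Rightarrow> bool" where
  "greedy_outcome \<phi> v \<pi> C \<longleftrightarrow> greedy_reach \<phi> v \<pi> (length \<pi>) C"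

definition SW :: "'a charfun \<Rightarrow> 'a set set \<Rightarrow> real" where
  "SW v C = (\<Sum>S\<in>C. v S)"

definition opt_SW :: "'a set \<Rightarrow> 'a charfun \<Rightarrow> real" where
  "opt_SW N v = Max {SW v C | C. partition_on N C}"

end

theory Submission
  imports Defs
begin

text \<open>
  Splitting a block of an optimal partition into singletons cannot increase welfare, so every
  block B of an optimal partition P satisfies \<open>(\<Sum>x\<in>B. v {x}) \<le> v B\<close>; in V_2 this forces
  blocks of at most two players, since \<open>v B \<le> mx < 3 mn\<close>. The policy pays the founder of a
  coalition its whole value, except that a second member who is the founder's partner in P
  receives its marginal contribution. An arriving player then earns \<open>v {k} > 0\<close> alone, its
  marginal contribution when joining its partner while the partner is still alone, and nothing
  anywhere else. Hence greedy players form only singletons and pairs of P, and whenever a player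
  declines to join its partner, superadditivity of the pair makes its marginal contribution equal
  to \<open>v {k}\<close>. By induction, the welfare of the current structure always equals the welfare of P
  restricted to the players that have arrived.
\<close>

lemma finite_SW_partitions:
  assumes "finite N"
  shows "finite {SW v C | C. partition_on N C}"
proof -
  have "{SW v C | C. partition_on N C} = SW v ` {C. partition_on N C}" by auto
  then show ?thesis using finitely_many_partition_on[OF assms] by simp
qed

lemma SW_le_opt_SW:
  assumes "finite N" "partition_on N C"
  shows "SW v C \<le> opt_SW N v"
  unfolding opt_SW_def using finite_SW_partitions[OF assms(1)] assms(2) by (intro Max_ge) auto

definition opt_partition :: "'a set \<Rightarrow> 'a charfun \<Rightarrow> 'a set set" where
  "opt_partition N v = (SOME P. partition_on N P \<and> SW v P = opt_SW N v)"

lemma opt_partition: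
  assumes "finite N"
  shows "partition_on N (opt_partition N v)" and "SW v (opt_partition N v) = opt_SW N v"
proof -
  have "{SW v C | C. partition_on N C} \<noteq> {}"
    using partition_on_singletons[of N] by auto
  then have "opt_SW N v \<in> {SW v C | C. partition_on N C}"
    unfolding opt_SW_def using Max_in finite_SW_partitions[OF assms] by blast
  then have "\<exists>P. partition_on N P \<and> SW v P = opt_SW N v" by auto
  then have "partition_on N (opt_partition N v) \<and> SW v (opt_partition N v) = opt_SW N v"
    unfolding opt_partition_def by (rule someI_ex)
  then show "partition_on N (opt_partition N v)" "SW v (opt_partition N v) = opt_SW N v"
    by auto
qed

lemma partition_on_split_block:
  assumes "partition_on N P" "B \<in> P"
  shows "partition_on N (P - {B} \<union> (\<lambda>x. {x}) ` B)"
proof (rule partition_onI)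
  show "\<Union>(P - {B} \<union> (\<lambda>x. {x}) ` B) = N" using partition_onD1[OF assms(1)] assms(2) by auto
  show "{} \<notin> P - {B} \<union> (\<lambda>x. {x}) ` B" using partition_onD3[OF assms(1)] by auto
  fix p q assume "p \<in> P - {B} \<union> (\<lambda>x. {x}) ` B" "q \<in> P - {B} \<union> (\<lambda>x. {x}) ` B" "p \<noteq> q"
  then show "disjnt p q"
    using disjointD[OF partition_onD2[OF assms(1)]] assms(2) by (auto simp: disjnt_def)
qed

lemma SW_split_block:
  assumes "finite N" "partition_on N P" "B \<in> P"
  shows "SW v (P - {B} \<union> (\<lambda>x. {x}) ` B) = SW v P - v B + (\<Sum>x\<in>B. v {x})"
proof -
  have "B \<subseteq> N" using partition_onD1[OF assms(2)] assms(3) by blast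
  then have fin: "finite P" "finite B"
    using finite_elements[OF assms(1,2)] finite_subset assms(1) by auto
  have "{x} \<notin> P - {B}" if "x \<in> B" for x
    using disjointD[OF partition_onD2[OF assms(2)], of "{x}" B] assms(3) that by auto
  then have "(P - {B}) \<inter> (\<lambda>x. {x}) ` B = {}" by auto
  then have "SW v (P - {B} \<union> (\<lambda>x. {x}) ` B) = SW v (P - {B}) + SW v ((\<lambda>x. {x}) ` B)"
    unfolding SW_def using fin by (simp add: sum.union_disjoint)
  also have "SW v ((\<lambda>x. {x}) ` B) = (\<Sum>x\<in>B. v {x})"
    unfolding SW_def by (simp add: sum.reindex)
  also have "SW v (P - {B}) = SW v P - v B"
    unfolding SW_def using fin assms(3) by (simp add: sum_diff1)
  finally show ?thesis .
qed

lemma opt_partition_block_superadditive: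
  assumes "finite N" "B \<in> opt_partition N v"
  shows "(\<Sum>x\<in>B. v {x}) \<le> v B"
  using SW_split_block[OF assms(1) opt_partition(1)[OF assms(1)] assms(2), of v]
    SW_le_opt_SW[OF assms(1) partition_on_split_block[OF opt_partition(1)[OF assms(1)] assms(2)], of v]
    opt_partition(2)[OF assms(1), of v]
  by linarith

lemma V2_opt_partition_card_le_2:
  assumes "finite N" "v \<in> V2 N mn mx" "B \<in> opt_partition N v"
  shows "card B \<le> 2"
proof (rule ccontr)
  assume "\<not> card B \<le> 2"
  then have "3 * mn \<le> card B * mn"
    using assms(2) unfolding V2_def by (simp add: mult_right_mono)
  have B: "B \<subseteq> N" "B \<noteq> {}"
    using opt_partition(1)[OF assms(1)] assms(3) unfolding partition_on_def by auto
  have bm: "bounded_monotone N mn mx v" and "mx < 3 * mn"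
    using assms(2) unfolding V2_def by auto
  have "card B * mn = (\<Sum>x\<in>B. mn)" by simp
  also have "\<dots> \<le> (\<Sum>x\<in>B. v {x})"
    using bm B by (intro sum_mono) (auto simp: bounded_monotone_def)
  also have "\<dots> \<le> v B" using opt_partition_block_superadditive[OF assms(1,3)] .
  also have "\<dots> \<le> mx" using bm B unfolding bounded_monotone_def by blast
  finally show False using \<open>3 * mn \<le> card B * mn\<close> \<open>mx < 3 * mn\<close> by linarith
qed

fun pair_bonus :: "'a set set \<Rightarrow> 'a charfun \<Rightarrow> 'a list \<Rightarrow> real" where
  "pair_bonus P v (a # b # _) = (if {a, b} \<in> P then v {a, b} - v {a} else 0)"
| "pair_bonus P v _ = 0"

fun pair_policy :: "'a set set \<Rightarrow> 'a policy" where
  "pair_policy P v [] x = 0"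
| "pair_policy P v (a # \<sigma>) x =
     (if x = a then v (set (a # \<sigma>)) - pair_bonus P v (a # \<sigma>)
      else if \<sigma> \<noteq> [] \<and> x = hd \<sigma> then pair_bonus P v (a # \<sigma>) else 0)"

lemma pair_policy_sum:
  assumes "distinct \<sigma>" "v {} = 0"
  shows "(\<Sum>x\<in>set \<sigma>. pair_policy P v \<sigma> x) = v (set \<sigma>)"
proof (cases \<sigma> rule: remdups_adj.cases)
  case (3 a b \<rho>)
  have "(\<Sum>x\<in>set \<rho>. pair_policy P v \<sigma> x) = 0"
    using assms(1) 3 by (intro sum.neutral) auto
  then show ?thesis using assms(1) 3 by auto
qed (use assms in auto)

lemma pair_policy_prefix_mono:
  assumes "prefix \<sigma> \<tau>" "distinct \<tau>" "x \<in> set \<sigma>"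
    and mono: "\<And>S. S \<noteq> {} \<Longrightarrow> S \<subseteq> set \<tau> \<Longrightarrow> v S \<le> v (set \<tau>)"
  shows "pair_policy P v \<sigma> x \<le> pair_policy P v \<tau> x"
proof -
  obtain \<rho> where \<tau>: "\<tau> = \<sigma> @ \<rho>" using assms(1) prefixE by blast
  obtain a \<sigma>' where \<sigma>: "\<sigma> = a # \<sigma>'" using assms(3) by (cases \<sigma>) auto
  show ?thesis
  proof (cases "\<sigma>' = []")
    case True
    have "v {a} \<le> v (set \<tau>)" and "v {a, hd \<rho>} \<le> v (set \<tau>)" if "\<rho> \<noteq> []"
      using mono \<tau> \<sigma> True that by auto
    then show ?thesis
      using assms(2,3) \<tau> \<sigma> True by (cases \<rho>) auto
  next
    case False
    then obtain b \<sigma>'' where "\<sigma>' = b # \<sigma>''" by (cases \<sigma>') auto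
    moreover have "v (set \<sigma>) \<le> v (set \<tau>)" using mono[of "set \<sigma>"] \<tau> \<sigma> by auto
    ultimately show ?thesis using \<tau> \<sigma> by auto
  qed
qed

lemma pair_policy_snoc:
  assumes "distinct (\<sigma> @ [k])"
  shows "pair_policy P v (\<sigma> @ [k]) k =
    (if \<sigma> = [] then v {k}
     else if \<exists>j. \<sigma> = [j] \<and> {j, k} \<in> P then v (insert k (set \<sigma>)) - v (set \<sigma>)
     else 0)"
  using assms by (cases \<sigma> rule: remdups_adj.cases) (auto simp: insert_commute)

lemma set_restr [simp]: "set (restr xs S) = set xs \<inter> S"
  unfolding restr_def by auto

lemma distinct_restr [simp]: "distinct xs \<Longrightarrow> distinct (restr xs S)"
  unfolding restr_def by simp

lemma nth_notin_set_take: "distinct \<pi> \<Longrightarrow> t < length \<pi> \<Longrightarrow> \<pi> ! t \<notin> set (take t \<pi>)"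
  by (auto simp: in_set_conv_nth nth_eq_iff_index_eq)

lemma restr_insert_nth:
  assumes "distinct \<pi>" "t < length \<pi>" "S \<subseteq> set (take t \<pi>)"
  shows "restr \<pi> (insert (\<pi> ! t) S) = restr (take t \<pi>) S @ [\<pi> ! t]"
proof -
  define xs k ys where "xs = take t \<pi>" and "k = \<pi> ! t" and "ys = drop (Suc t) \<pi>"
  have \<pi>: "\<pi> = xs @ k # ys"
    unfolding xs_def k_def ys_def using assms(2) by (rule id_take_nth_drop)
  then have "distinct (xs @ k # ys)" using assms(1) by simp
  then have "filter (\<lambda>x. x \<in> insert k S) xs = filter (\<lambda>x. x \<in> S) xs"
    and "filter (\<lambda>x. x \<in> insert k S) ys = []"
    using assms(3) unfolding xs_def[symmetric] by (auto intro!: filter_cong simp: filter_empty_conv)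
  then have "restr (xs @ k # ys) (insert k S) = restr xs S @ [k]"
    unfolding restr_def by simp
  with \<pi> show ?thesis unfolding xs_def[symmetric] k_def[symmetric] by simp
qed

lemma distinct_set_eq_singleton:
  assumes "distinct xs"
  shows "set xs = {j} \<longleftrightarrow> xs = [j]"
proof
  assume "set xs = {j}"
  then have "length xs = 1" using distinct_card[OF assms] by simp
  then show "xs = [j]" using \<open>set xs = {j}\<close> by (cases xs) auto
qed simp

lemma pair_policy_newcomer:
  assumes "distinct \<pi>" "t < length \<pi>" "S \<subseteq> set (take t \<pi>)"
  shows "pair_policy P v (restr \<pi> (insert (\<pi> ! t) S)) (\<pi> ! t) =
    (if S = {} then v {\<pi> ! t}
     else if \<exists>j. S = {j} \<and> {j, \<pi> ! t} \<in> P then v (insert (\<pi> ! t) S) - v S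
     else 0)"
proof -
  let ?\<sigma> = "restr (take t \<pi>) S"
  have set_\<sigma>: "set ?\<sigma> = S" using assms(3) by auto
  have "distinct (?\<sigma> @ [\<pi> ! t])"
    using assms set_\<sigma> nth_notin_set_take[OF assms(1,2)] by auto
  note snoc = pair_policy_snoc[OF this, of P v]
  have empty: "?\<sigma> = [] \<longleftrightarrow> S = {}" by (metis set_\<sigma> set_empty)
  have singleton: "?\<sigma> = [j] \<longleftrightarrow> S = {j}" for j
    using distinct_set_eq_singleton[of ?\<sigma> j] assms(1) set_\<sigma> by simp
  show ?thesis
    unfolding restr_insert_nth[OF assms] snoc empty singleton set_\<sigma> by (rule refl)
qed

lemma non_wasteful_pair_policy:
  assumes "\<And>v. v \<in> V \<Longrightarrow> v {} = 0"
  shows "non_wasteful N V (\<lambda>v. pair_policy (Q v) v)"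
  unfolding non_wasteful_def using assms pair_policy_sum by blast

lemma irrevocable_pair_policy:
  assumes "\<And>v. v \<in> V \<Longrightarrow> bounded_monotone N mn mx v"
  shows "irrevocable N V (\<lambda>v. pair_policy (Q v) v)"
  unfolding irrevocable_def
proof (intro ballI allI impI)
  fix v \<pi> S T x
  assume "v \<in> V" and \<pi>: "arrival_order N \<pi>"
    and ST: "S \<subseteq> T \<and> T \<subseteq> N \<and> prefix (restr \<pi> S) (restr \<pi> T)" and "x \<in> S"
  have "distinct \<pi>" "set \<pi> = N" using \<pi> unfolding arrival_order_def by auto
  moreover have "v S' \<le> v T" if "S' \<noteq> {}" "S' \<subseteq> T" for S'
    using assms[OF \<open>v \<in> V\<close>] that ST unfolding bounded_monotone_def by blast
  ultimately show "pair_policy (Q v) v (restr \<pi> S) x \<le> pair_policy (Q v) v (restr \<pi> T) x"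
    using ST \<open>x \<in> S\<close> by (intro pair_policy_prefix_mono) (auto simp: Int_absorb1)
qed

definition follows_partition :: "'a set set \<Rightarrow> 'a charfun \<Rightarrow> 'a set \<Rightarrow> 'a set set \<Rightarrow> bool" where
  "follows_partition P v A C \<longleftrightarrow>
     partition_on A C \<and> (\<forall>B\<in>C. \<exists>B'\<in>P. B \<subseteq> B') \<and> SW v C = (\<Sum>B\<in>P. v (B \<inter> A))"

locale pair_partition =
  fixes N :: "'a set" and P :: "'a set set" and v :: "'a charfun"
  assumes finite_N: "finite N"
    and partition: "partition_on N P"
    and card_block: "B \<in> P \<Longrightarrow> card B \<le> 2"
    and superadditive_block: "B \<in> P \<Longrightarrow> (\<Sum>x\<in>B. v {x}) \<le> v B"
    and v_empty: "v {} = 0"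
    and v_singleton_pos: "x \<in> N \<Longrightarrow> 0 < v {x}"
begin

lemma finite_P: "finite P"
  using finite_elements[OF finite_N partition] .

lemma block_eq: "B \<in> P \<Longrightarrow> B' \<in> P \<Longrightarrow> x \<in> B \<Longrightarrow> x \<in> B' \<Longrightarrow> B = B'"
  using disjointD[OF partition_onD2[OF partition]] by blast

lemma block_cases:
  assumes "B \<in> P" "k \<in> B"
  obtains "B = {k}" | j where "j \<noteq> k" "B = {j, k}"
proof -
  have "finite B" using assms partition finite_N unfolding partition_on_def
    by (metis Union_upper finite_subset)
  then have "card (B - {k}) \<le> Suc 0" using card_block[OF assms(1)] assms(2) by simp
  then have "B - {k} = {} \<or> (\<exists>j. B - {k} = {j})"
    using \<open>finite B\<close> by (metis card_0_eq card_1_singleton_iff finite_Diff le_Suc_eq le_zero_eq)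
  then show thesis using that assms(2) by blast
qed

lemma pair_superadditive: "{j, k} \<in> P \<Longrightarrow> j \<noteq> k \<Longrightarrow> v {j} + v {k} \<le> v {j, k}"
  using superadditive_block[of "{j, k}"] by simp

lemma sum_blocks_Int_insert:
  assumes "B \<in> P" "k \<in> B"
  shows "(\<Sum>B'\<in>P. v (B' \<inter> insert k A)) = (\<Sum>B'\<in>P. v (B' \<inter> A)) + (v (B \<inter> insert k A) - v (B \<inter> A))"
proof -
  have "v (B' \<inter> insert k A) = v (B' \<inter> A)" if "B' \<in> P - {B}" for B'
    using block_eq[of B B' k] assms that by (metis DiffE Int_insert_right singletonI)
  then have "(\<Sum>B'\<in>P - {B}. v (B' \<inter> insert k A)) = (\<Sum>B'\<in>P - {B}. v (B' \<inter> A))"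
    by (rule sum.cong[OF refl])
  then show ?thesis
    using sum.remove[OF finite_P assms(1), of "\<lambda>B'. v (B' \<inter> insert k A)"]
      sum.remove[OF finite_P assms(1), of "\<lambda>B'. v (B' \<inter> A)"] by simp
qed

lemma follows_partition_empty: "follows_partition P v {} {}"
  unfolding follows_partition_def SW_def by (simp add: partition_on_empty v_empty)

lemma follows_partition_finite:
  assumes "follows_partition P v A C"
  shows "finite C"
proof (rule finite_subset)
  show "C \<subseteq> Pow N"
    using assms partition unfolding follows_partition_def partition_on_def by blast
qed (use finite_N in simp)

lemma follows_partition_partner_singleton:
  assumes "follows_partition P v A C" "{j, k} \<in> P" "j \<in> A" "k \<notin> A"
  shows "{j} \<in> C"
proof -
  obtain B where B: "B \<in> C" "j \<in> B" "B \<subseteq> A"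
    using assms(1,3) unfolding follows_partition_def partition_on_def by blast
  moreover obtain B' where "B' \<in> P" "B \<subseteq> B'"
    using assms(1) B(1) unfolding follows_partition_def by blast
  ultimately have "B \<subseteq> {j, k}" using block_eq[OF assms(2)] by blast
  then have "B = {j}" using B assms(4) by blast
  then show ?thesis using B(1) by simp
qed

lemma follows_partition_insert_singleton:
  assumes inv: "follows_partition P v A C" and "k \<in> N" "k \<notin> A"
    and greedy: "\<And>j. {j} \<in> C \<Longrightarrow> {j, k} \<in> P \<Longrightarrow> v {j, k} - v {j} \<le> v {k}"
  shows "follows_partition P v (insert k A) (insert {k} C)"
proof -
  obtain B where B: "B \<in> P" "k \<in> B" using partition assms(2) unfolding partition_on_def by blast
  have marginal: "v (B \<inter> insert k A) - v (B \<inter> A) = v {k}"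
  proof (cases rule: block_cases[OF B])
    case (2 j)
    show ?thesis
    proof (cases "j \<in> A")
      case True
      then have "{j} \<in> C" using follows_partition_partner_singleton[OF inv] 2 B(1) \<open>k \<notin> A\<close> by simp
      then have "v {j, k} - v {j} \<le> v {k}" using greedy 2 B(1) by simp
      moreover have "v {j} + v {k} \<le> v {j, k}" using pair_superadditive 2 B(1) by simp
      ultimately show ?thesis using 2 True \<open>k \<notin> A\<close> by (simp add: Int_absorb2)
    qed (use 2 \<open>k \<notin> A\<close> v_empty in auto)
  qed (use \<open>k \<notin> A\<close> v_empty in auto)
  have C: "partition_on A C" "finite C" "\<Union>C = A"
    using inv follows_partition_finite unfolding follows_partition_def partition_on_def by auto
  then have "{k} \<notin> C" using \<open>k \<notin> A\<close> by blast
  then have "SW v (insert {k} C) = v {k} + SW v C" unfolding SW_def using C(2) by simp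
  moreover have "partition_on (insert k A) (insert {k} C)"
    using C \<open>k \<notin> A\<close> by (subst partition_on_insert) (auto simp: disjnt_def)
  ultimately show ?thesis
    using inv B marginal sum_blocks_Int_insert[OF B, of A] unfolding follows_partition_def by auto
qed

lemma follows_partition_join_partner:
  assumes inv: "follows_partition P v A C" and "{j} \<in> C" "{j, k} \<in> P" "k \<notin> A"
  shows "follows_partition P v (insert k A) (insert {j, k} (C - {{j}}))"
proof -
  have C: "partition_on A C" "finite C" "\<Union>C = A"
    using inv follows_partition_finite unfolding follows_partition_def partition_on_def by auto
  have "j \<in> A" using C(3) \<open>{j} \<in> C\<close> by blast
  have disj: "disjnt {j} (\<Union>(C - {{j}}))"
    using disjointD[OF partition_onD2[OF C(1)] \<open>{j} \<in> C\<close>] by (auto simp: disjnt_def)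
  then have "partition_on (A - {j}) (C - {{j}})"
    using C(1) \<open>{j} \<in> C\<close> partition_on_insert[OF disj, of A] by (simp add: insert_absorb)
  moreover have "disjnt {j, k} (\<Union>(C - {{j}}))" using disj C(3) \<open>k \<notin> A\<close> by (auto simp: disjnt_def)
  moreover have "insert k A - {j, k} = A - {j}" using \<open>k \<notin> A\<close> by auto
  ultimately have "partition_on (insert k A) (insert {j, k} (C - {{j}}))"
    using \<open>j \<in> A\<close> by (subst partition_on_insert) auto
  moreover have "{j, k} \<notin> C" using C(3) \<open>k \<notin> A\<close> by blast
  then have "SW v (insert {j, k} (C - {{j}})) = v {j, k} + SW v C - v {j}"
    unfolding SW_def using C(2) \<open>{j} \<in> C\<close> by (simp add: sum_diff1)
  moreover have "{j, k} \<inter> insert k A = {j, k}" "{j, k} \<inter> A = {j}" using \<open>j \<in> A\<close> \<open>k \<notin> A\<close> by auto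
  ultimately show ?thesis
    using inv \<open>{j, k} \<in> P\<close> sum_blocks_Int_insert[OF \<open>{j, k} \<in> P\<close>, of k A] unfolding follows_partition_def by auto
qed

lemma greedy_newcomer_choice:
  assumes \<phi>: "\<phi> v = pair_policy P v" and "distinct \<pi>" "t < length \<pi>" "\<pi> ! t \<in> N"
    and inv: "follows_partition P v (set (take t \<pi>)) C" and "S \<in> insert {} C"
    and greedy: "\<forall>S'\<in>insert {} C. \<phi> v (restr \<pi> (insert (\<pi> ! t) S')) (\<pi> ! t)
                                 \<le> \<phi> v (restr \<pi> (insert (\<pi> ! t) S)) (\<pi> ! t)"
  obtains "S = {}" "\<And>j. {j} \<in> C \<Longrightarrow> {j, \<pi> ! t} \<in> P \<Longrightarrow> v {j, \<pi> ! t} - v {j} \<le> v {\<pi> ! t}"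
  | j where "S = {j}" "{j, \<pi> ! t} \<in> P" "{j} \<in> C"
proof -
  define k where "k = \<pi> ! t"
  define share where "share S' =
    (if S' = {} then v {k} else if \<exists>j. S' = {j} \<and> {j, k} \<in> P then v (insert k S') - v S' else 0)"
    for S'
  have share: "\<phi> v (restr \<pi> (insert k S')) k = share S'" if "S' \<in> insert {} C" for S'
  proof -
    have "S' \<subseteq> set (take t \<pi>)" using that inv unfolding follows_partition_def partition_on_def by auto
    then show ?thesis
      using pair_policy_newcomer[OF assms(2,3), of S'] \<phi> unfolding share_def k_def by simp
  qed
  have max: "share S' \<le> share S" if "S' \<in> insert {} C" for S'
    using bspec[OF greedy that] share[OF that] share[OF \<open>S \<in> insert {} C\<close>] unfolding k_def by simp
  have "0 < v {k}" using v_singleton_pos \<open>\<pi> ! t \<in> N\<close> unfolding k_def .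
  then consider "S = {}" | j where "S = {j}" "{j, k} \<in> P" "{j} \<in> C"
    using max[of "{}"] \<open>S \<in> insert {} C\<close> unfolding share_def by (auto split: if_splits)
  then show thesis
  proof cases
    case 1
    have "v {j, k} - v {j} \<le> v {k}" if "{j} \<in> C" "{j, k} \<in> P" for j
      using max[of "{j}"] that 1 unfolding share_def by (auto simp: insert_commute)
    then show thesis using that(1) 1 unfolding k_def by blast
  qed (use that(2) k_def in blast)
qed

lemma greedy_reach_follows_partition:
  assumes \<phi>: "\<phi> v = pair_policy P v" and \<pi>: "arrival_order N \<pi>"
    and "greedy_reach \<phi> v \<pi> t C"
  shows "follows_partition P v (set (take t \<pi>)) C"
  using assms(3)
proof (induction rule: greedy_reach.induct)
  case start
  then show ?case using follows_partition_empty by simp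
next
  case (step t C S)
  define k A where "k = \<pi> ! t" and "A = set (take t \<pi>)"
  have "distinct \<pi>" "set \<pi> = N" using \<pi> unfolding arrival_order_def by auto
  then have "k \<in> N" "k \<notin> A"
    using step.hyps(2) nth_notin_set_take unfolding k_def A_def by auto
  have A': "set (take (Suc t) \<pi>) = insert k A"
    unfolding A_def k_def using step.hyps(2) by (simp add: take_Suc_conv_app_nth)
  have inv: "follows_partition P v A C" using step.IH unfolding A_def .
  then have "{} \<notin> C" unfolding follows_partition_def partition_on_def by blast
  show ?case
  proof (rule greedy_newcomer_choice[where \<phi> = \<phi>,
        OF \<phi> \<open>distinct \<pi>\<close> step.hyps(2) \<open>k \<in> N\<close>[unfolded k_def] step.IH step.hyps(3,4)])
    assume "S = {}" "\<And>j. {j} \<in> C \<Longrightarrow> {j, \<pi> ! t} \<in> P \<Longrightarrow> v {j, \<pi> ! t} - v {j} \<le> v {\<pi> ! t}"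
    then show ?thesis
      using follows_partition_insert_singleton[OF inv \<open>k \<in> N\<close> \<open>k \<notin> A\<close>] A' \<open>{} \<notin> C\<close>
      unfolding k_def by simp
  next
    fix j assume "S = {j}" "{j, \<pi> ! t} \<in> P" "{j} \<in> C"
    then show ?thesis
      using follows_partition_join_partner[OF inv, of j k] \<open>k \<notin> A\<close> A'
      unfolding k_def by (simp add: insert_commute)
  qed
qed

lemma greedy_outcome_SW:
  assumes "\<phi> v = pair_policy P v" "arrival_order N \<pi>" "greedy_outcome \<phi> v \<pi> C"
  shows "SW v C = SW v P"
proof -
  have "SW v C = (\<Sum>B\<in>P. v (B \<inter> set \<pi>))"
    using greedy_reach_follows_partition[of \<phi> \<pi> "length \<pi>" C] assms
    unfolding greedy_outcome_def follows_partition_def by simp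
  also have "\<dots> = SW v P"
    unfolding SW_def
  proof (rule sum.cong)
    fix B assume "B \<in> P"
    then have "B \<subseteq> set \<pi>"
      using assms(2) partition unfolding arrival_order_def partition_on_def by auto
    then show "v (B \<inter> set \<pi>) = v B" by (simp add: Int_absorb2)
  qed simp
  finally show ?thesis .
qed

end

lemma V2_pair_partition:
  assumes "finite N" "v \<in> V2 N mn mx"
  shows "pair_partition N (opt_partition N v) v"
proof
  have "0 < mn" and bm: "bounded_monotone N mn mx v" using assms(2) unfolding V2_def by auto
  show "v {} = 0" using bm unfolding bounded_monotone_def by blast
  show "0 < v {x}" if "x \<in> N" for x
  proof -
    have "mn \<le> v {x}" using bm that unfolding bounded_monotone_def by blast
    then show ?thesis using \<open>0 < mn\<close> by linarith
  qed
  show "card B \<le> 2" if "B \<in> opt_partition N v" for B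
    using V2_opt_partition_card_le_2[OF assms that] .
  show "(\<Sum>x\<in>B. v {x}) \<le> v B" if "B \<in> opt_partition N v" for B
    using opt_partition_block_superadditive[OF assms(1) that] .
qed (use assms(1) opt_partition(1) in auto)

theorem theorem3:
  fixes N :: "'a set" and mn mx :: real
  assumes "finite N" and "0 < mn" and "2 * mn \<le> mx" and "mx < 3 * mn"
  shows "\<exists>\<phi> :: 'a policy.
           non_wasteful N (V2 N mn mx) \<phi> \<and> irrevocable N (V2 N mn mx) \<phi> \<and>
           (\<forall>v\<in>V2 N mn mx. \<forall>\<pi> C. arrival_order N \<pi> \<and> greedy_outcome \<phi> v \<pi> C
              \<longrightarrow> SW v C = opt_SW N v)"
proof (intro exI conjI ballI allI impI)
  let ?\<phi> = "\<lambda>v. pair_policy (opt_partition N v) v"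
  have V2_bounded_monotone: "bounded_monotone N mn mx v" if "v \<in> V2 N mn mx" for v
    using that unfolding V2_def by blast
  then show "non_wasteful N (V2 N mn mx) ?\<phi>"
    by (intro non_wasteful_pair_policy) (simp add: bounded_monotone_def)
  show "irrevocable N (V2 N mn mx) ?\<phi>"
    using V2_bounded_monotone by (rule irrevocable_pair_policy)
  fix v \<pi> C
  assume "v \<in> V2 N mn mx" "arrival_order N \<pi> \<and> greedy_outcome ?\<phi> v \<pi> C"
  then have "SW v C = SW v (opt_partition N v)"
    using pair_partition.greedy_outcome_SW[OF V2_pair_partition[OF assms(1)], of v mn mx ?\<phi> \<pi> C]
    by simp
  then show "SW v C = opt_SW N v" using opt_partition(2)[OF assms(1)] by simp
qed

end
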